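(* Let $(\Omega,\mathcal F,\mathbb P)$ be a probability space with filtration $\{\mathcal F_n\}_{n\ge0}$, let $\{X_n\}_{n\ge0}$ be a supermartingale adapted to $\{\mathcal F_n\}$, and let $\kappa$ be a stopping time w.r.t. $\{\mathcal F_n\}$. Suppose there exist positive reals $b_1,b_2,c_1,c_2,c_3$ with $c_2>c_3$ such that (A1) $\mathbb P(\kappa>n)\le c_1e^{-c_2 n}$ for all sufficiently large $n\in\mathbb N$, and (A2) for all $n\in\mathbb N$, $|X_{n+1}-X_n|\le b_1 n^{b_2}e^{c_3 n}$ almost surely. Then $\mathbb E(|X_\kappa|)<\infty$ and $\mathbb E(X_\kappa)\le\mathbb E(X_0)$.
   Context: A supermartingale is an adapted process with $\mathbb E|X_n|<\infty$ and $\mathbb E(X_{n+1}\mid\mathcal F_n)\le X_n$ a.s. for all $n$. A stopping time is a random variable $\kappa:\Omega\to\mathbb N\cup\{\infty\}$ with $\{\kappa\le n\}\in\mathcal F_n$ for all $n$. *)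

theory Defs
  imports "HOL-Probability.Probability" "HOL-Library.Extended_Nat"
begin

definition nat_filtration :: "'a measure \<Rightarrow> (nat \<Rightarrow> 'a measure) \<Rightarrow> bool" where
  "nat_filtration M F \<longleftrightarrow> (\<forall>n. subalgebra M (F n)) \<and> (\<forall>m n. m \<le> n \<longrightarrow> sets (F m) \<subseteq> sets (F n))"

definition supermartingale :: "'a measure \<Rightarrow> (nat \<Rightarrow> 'a measure) \<Rightarrow> (nat \<Rightarrow> 'a \<Rightarrow> real) \<Rightarrow> bool" where
  "supermartingale M F X \<longleftrightarrow>
     (\<forall>n. X n \<in> borel_measurable (F n)) \<and>
     (\<forall>n. integrable M (X n)) \<and>
     (\<forall>n. AE \<omega> in M. real_cond_exp M (F n) (X (Suc n)) \<omega> \<le> X n \<omega>)"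

definition nat_stopping_time :: "'a measure \<Rightarrow> (nat \<Rightarrow> 'a measure) \<Rightarrow> ('a \<Rightarrow> enat) \<Rightarrow> bool" where
  "nat_stopping_time M F \<kappa> \<longleftrightarrow> (\<forall>n. {\<omega> \<in> space M. \<kappa> \<omega> \<le> enat n} \<in> sets (F n))"

text \<open>The stopped value X_\<kappa>; on the event {\<kappa> = \<infinity>} it is set to 0 (a null event under the hypotheses).\<close>
definition stopped_value :: "(nat \<Rightarrow> 'a \<Rightarrow> real) \<Rightarrow> ('a \<Rightarrow> enat) \<Rightarrow> 'a \<Rightarrow> real" where
  "stopped_value X \<kappa> \<omega> = (case \<kappa> \<omega> of enat n \<Rightarrow> X n \<omega> | \<infinity> \<Rightarrow> 0)"

end

theory Submission
  imports Defs "HOL-Real_Asymp.Real_Asymp"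
begin

text \<open>
  Where \<open>\<kappa>\<close> is finite, \<open>X\<^sub>\<kappa> = X\<^sub>0 + \<Sum>\<^sub>n 1{\<kappa> > n} (X\<^sub>n\<^sub>+\<^sub>1 - X\<^sub>n)\<close> is a finite sum,
  and \<open>\<kappa>\<close> is finite almost surely because \<open>P(\<kappa> > n) \<rightarrow> 0\<close>. Since \<open>{\<kappa> > n} \<in> F\<^sub>n\<close>, the
  supermartingale property gives each summand a nonpositive expectation. The increment bound and
  the tail bound make \<open>E |summand n| \<le> b\<^sub>1 n\<^bsup>b\<^sub>2\<^esup> e\<^bsup>c\<^sub>3 n\<^esup> \<cdot> c\<^sub>1 e\<^bsup>-c\<^sub>2 n\<^esup>\<close>, which is summable as
  \<open>c\<^sub>2 > c\<^sub>3\<close>; so the series converges in \<open>L\<^sup>1\<close> and can be integrated termwise.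
\<close>

lemma summable_powr_mult_exp_neg:
  fixes a b :: real
  assumes "a > 0"
  shows "summable (\<lambda>n::nat. real n powr b * exp (- a * real n))"
proof (rule summable_comparison_test_bigo)
  have "(\<lambda>n::nat. exp (- (a/2) * real n)) = (\<lambda>n. exp (- (a/2)) ^ n)"
    by (simp add: exp_of_nat_mult[symmetric] mult.commute)
  then show "summable (\<lambda>n::nat. norm (exp (- (a/2) * real n)))"
    using assms by (simp add: summable_geometric)
  show "(\<lambda>n::nat. real n powr b * exp (- a * real n)) \<in> O(\<lambda>n. exp (- (a/2) * real n))"
    using assms by real_asymp
qed

lemma AE_enat_finite_if_measure_greater_tendsto_0:
  fixes \<kappa> :: "'a \<Rightarrow> enat"
  assumes "finite_measure M"
    and sets: "\<And>n. {\<omega> \<in> space M. enat n < \<kappa> \<omega>} \<in> sets M"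
    and lim: "(\<lambda>n. measure M {\<omega> \<in> space M. enat n < \<kappa> \<omega>}) \<longlonglongrightarrow> 0"
  shows "AE \<omega> in M. \<kappa> \<omega> \<noteq> \<infinity>"
proof -
  interpret finite_measure M by fact
  define B where "B n = {\<omega> \<in> space M. enat n < \<kappa> \<omega>}" for n
  have B_sets: "range B \<subseteq> sets M"
    using sets by (auto simp: B_def)
  have "decseq B"
  proof (rule decseq_SucI)
    show "B (Suc n) \<subseteq> B n" for n
      using less_trans[of "enat n" "enat (Suc n)"] by (auto simp: B_def)
  qed
  with B_sets have "(\<lambda>n. measure M (B n)) \<longlonglongrightarrow> measure M (\<Inter>n. B n)"
    by (intro Lim_measure_decseq) auto
  with lim[folded B_def] have "0 = measure M (\<Inter>n. B n)"
    by (rule LIMSEQ_unique)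
  with B_sets have "(\<Inter>n. B n) \<in> null_sets M"
    by (intro null_setsI) (auto simp: emeasure_eq_measure)
  moreover have "{\<omega> \<in> space M. \<not> \<kappa> \<omega> \<noteq> \<infinity>} \<subseteq> (\<Inter>n. B n)"
    by (auto simp: B_def)
  ultimately show ?thesis
    by (rule AE_I')
qed

lemma supermartingale_integrable: "supermartingale M F X \<Longrightarrow> integrable M (X n)"
  unfolding supermartingale_def by auto

lemma nat_filtration_subalgebra: "nat_filtration M F \<Longrightarrow> subalgebra M (F n)"
  unfolding nat_filtration_def by auto

lemma nat_stopping_time_greater_in_sets:
  assumes "nat_filtration M F" "nat_stopping_time M F \<kappa>"
  shows "{\<omega> \<in> space M. enat n < \<kappa> \<omega>} \<in> sets (F n)"
proof -
  have "{\<omega> \<in> space M. enat n < \<kappa> \<omega>} = space (F n) - {\<omega> \<in> space M. \<kappa> \<omega> \<le> enat n}"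
    using nat_filtration_subalgebra[OF assms(1)] by (auto simp: subalgebra_def)
  then show ?thesis
    using assms(2) by (auto simp: nat_stopping_time_def)
qed

lemma all_enat_less_iff: "(\<forall>n. enat n < x) \<longleftrightarrow> x = \<infinity>"
  by (cases x) auto

lemma nat_stopping_time_measurable:
  assumes "nat_filtration M F" "nat_stopping_time M F \<kappa>"
  shows "\<kappa> \<in> M \<rightarrow>\<^sub>M count_space UNIV"
proof -
  have [measurable]: "Measurable.pred M (\<lambda>\<omega>. \<kappa> \<omega> \<le> enat n)" for n
    using assms nat_filtration_subalgebra[OF assms(1), of n]
    by (auto simp: pred_def nat_stopping_time_def subalgebra_def)
  have "x = enat k \<longleftrightarrow> x \<le> enat k \<and> (\<forall>j<k. \<not> x \<le> enat j)" for x k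
    by (cases x) (auto simp: not_le, meson le_neq_implies_less less_irrefl)
  then have finite_level: "\<kappa> -` {enat k} \<inter> space M = {\<omega> \<in> space M. \<kappa> \<omega> \<le> enat k \<and> (\<forall>j<k. \<not> \<kappa> \<omega> \<le> enat j)}" for k
    by auto
  have infinite_level: "\<kappa> -` {\<infinity>} \<inter> space M = {\<omega> \<in> space M. \<forall>n. \<not> \<kappa> \<omega> \<le> enat n}"
    by (auto simp: not_le all_enat_less_iff)
  have "\<kappa> -` {a} \<inter> space M \<in> sets M" for a
  proof (cases a)
    case (enat k)
    show ?thesis
      unfolding enat finite_level by measurable
  next
    case infinity
    show ?thesis
      unfolding infinity infinite_level by measurable
  qed
  then show ?thesis
    by (simp add: measurable_count_space_eq2_countable)
qed

lemma stopped_value_borel_measurable: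
  assumes "nat_filtration M F" "nat_stopping_time M F \<kappa>" "\<And>n. X n \<in> borel_measurable M"
  shows "stopped_value X \<kappa> \<in> borel_measurable M"
  using nat_stopping_time_measurable[OF assms(1,2)] assms(3)
  unfolding stopped_value_def by measurable

lemma AE_stopped_value_sums_increments:
  assumes "AE \<omega> in M. \<kappa> \<omega> \<noteq> \<infinity>"
  shows "AE \<omega> in M.
           (\<lambda>n. indicator {\<omega> \<in> space M. enat n < \<kappa> \<omega>} \<omega> * (X (Suc n) \<omega> - X n \<omega>))
             sums (stopped_value X \<kappa> \<omega> - X 0 \<omega>) \<and>
           summable (\<lambda>n. \<bar>indicator {\<omega> \<in> space M. enat n < \<kappa> \<omega>} \<omega> * (X (Suc n) \<omega> - X n \<omega>)\<bar>)"
  using assms AE_space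
proof eventually_elim
  case (elim \<omega>)
  then obtain k where k: "\<kappa> \<omega> = enat k"
    by auto
  define D where "D n = indicator {\<omega> \<in> space M. enat n < \<kappa> \<omega>} \<omega> * (X (Suc n) \<omega> - X n \<omega>)" for n
  have vanish: "D n = 0" if "n \<notin> {..<k}" for n
    using that k by (simp add: D_def)
  then have "D sums (\<Sum>n<k. D n)"
    by (intro sums_finite) auto
  also have "(\<Sum>n<k. D n) = (\<Sum>n<k. X (Suc n) \<omega> - X n \<omega>)"
    using elim(2) k by (intro sum.cong) (auto simp: D_def)
  also have "\<dots> = stopped_value X \<kappa> \<omega> - X 0 \<omega>"
    using k by (simp add: sum_lessThan_telescope[of "\<lambda>n. X n \<omega>"] stopped_value_def)
  finally have "D sums (stopped_value X \<kappa> \<omega> - X 0 \<omega>)" .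
  moreover have "summable (\<lambda>n. \<bar>D n\<bar>)"
    using vanish by (intro summable_finite[of "{..<k}"]) auto
  ultimately show ?case
    unfolding D_def[abs_def] by simp
qed

lemma supermartingale_integral_indicator_increment_nonpos:
  assumes "finite_measure M" "subalgebra M (F i)" "supermartingale M F X" "A \<in> sets (F i)"
  shows "(\<integral>\<omega>. indicator A \<omega> * (X (Suc i) \<omega> - X i \<omega>) \<partial>M) \<le> 0"
proof -
  interpret finite_measure M by fact
  interpret finite_measure_subalgebra M "F i"
    by unfold_locales (rule assms(2))
  have X_int: "integrable M (X n)" for n
    using assms(3) by (rule supermartingale_integrable)
  have A_meas [measurable]: "indicator A \<in> borel_measurable (F i)"
    using assms(4) by simp
  have A_sets: "A \<in> sets M"
    using assms(2,4) by (auto simp: subalgebra_def)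
  have int_A: "integrable M (\<lambda>\<omega>. indicator A \<omega> * X n \<omega>)" for n
    using integrable_mult_indicator[OF A_sets X_int] by simp
  have "(\<integral>\<omega>. indicator A \<omega> * X (Suc i) \<omega> \<partial>M)
          = (\<integral>\<omega>. indicator A \<omega> * real_cond_exp M (F i) (X (Suc i)) \<omega> \<partial>M)"
    using real_cond_exp_intg(2)[OF int_A A_meas] X_int by simp
  also have "\<dots> \<le> (\<integral>\<omega>. indicator A \<omega> * X i \<omega> \<partial>M)"
  proof (rule integral_mono_AE)
    show "integrable M (\<lambda>\<omega>. indicator A \<omega> * real_cond_exp M (F i) (X (Suc i)) \<omega>)"
      using real_cond_exp_intg(1)[OF int_A A_meas] X_int by simp
    show "AE \<omega> in M. indicator A \<omega> * real_cond_exp M (F i) (X (Suc i)) \<omega> \<le> indicator A \<omega> * X i \<omega>"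
    proof -
      have "AE \<omega> in M. real_cond_exp M (F i) (X (Suc i)) \<omega> \<le> X i \<omega>"
        using assms(3) by (simp add: supermartingale_def)
      then show ?thesis
        by eventually_elim (simp add: mult_left_mono)
    qed
  qed (rule int_A)
  finally show ?thesis
    using int_A by (simp add: right_diff_distrib)
qed

lemma summable_integral_increments_if_tail_bounds:
  fixes X :: "nat \<Rightarrow> 'a \<Rightarrow> real"
  assumes "finite_measure M" "\<And>n. integrable M (X n)" "\<And>n. B n \<in> sets M"
    and increment_bound: "\<forall>\<^sub>F n in sequentially. AE \<omega> in M. \<bar>X (Suc n) \<omega> - X n \<omega>\<bar> \<le> K n"
    and tail_bound: "\<forall>\<^sub>F n in sequentially. measure M (B n) \<le> p n"
    and "\<And>n. K n \<ge> 0" "summable (\<lambda>n. K n * p n)"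
  shows "summable (\<lambda>n. \<integral>\<omega>. \<bar>indicator (B n) \<omega> * (X (Suc n) \<omega> - X n \<omega>)\<bar> \<partial>M)"
proof (rule summable_comparison_test_ev[OF _ assms(7)])
  interpret finite_measure M by fact
  show "\<forall>\<^sub>F n in sequentially. norm (\<integral>\<omega>. \<bar>indicator (B n) \<omega> * (X (Suc n) \<omega> - X n \<omega>)\<bar> \<partial>M) \<le> K n * p n"
    using increment_bound tail_bound
  proof eventually_elim
    case (elim n)
    have "(\<integral>\<omega>. \<bar>indicator (B n) \<omega> * (X (Suc n) \<omega> - X n \<omega>)\<bar> \<partial>M) \<le> (\<integral>\<omega>. indicator (B n) \<omega> * K n \<partial>M)"
    proof (rule integral_mono_AE)
      show "integrable M (\<lambda>\<omega>. \<bar>indicator (B n) \<omega> * (X (Suc n) \<omega> - X n \<omega>)\<bar>)"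
        using integrable_mult_indicator[OF assms(3) Bochner_Integration.integrable_diff[OF assms(2,2)]]
        by (intro integrable_abs) simp
      show "integrable M (\<lambda>\<omega>. indicator (B n) \<omega> * K n)"
        using integrable_mult_indicator[OF assms(3) integrable_const[of "K n"]] by simp
      show "AE \<omega> in M. \<bar>indicator (B n) \<omega> * (X (Suc n) \<omega> - X n \<omega>)\<bar> \<le> indicator (B n) \<omega> * K n"
        using elim(1) by eventually_elim (auto simp: abs_mult split: split_indicator)
    qed
    also have "\<dots> = K n * measure M (B n)"
      using assms(3) by simp
    also have "\<dots> \<le> K n * p n"
      using elim(2) assms(6) by (rule mult_left_mono)
    finally show ?case
      by simp
  qed
qed

lemma supermartingale_optional_stopping_summable:
  assumes "finite_measure M" "nat_filtration M F" "supermartingale M F X" "nat_stopping_time M F \<kappa>"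
    and finite: "AE \<omega> in M. \<kappa> \<omega> \<noteq> \<infinity>"
    and summable: "summable (\<lambda>n. \<integral>\<omega>. \<bar>indicator {\<omega> \<in> space M. enat n < \<kappa> \<omega>} \<omega> * (X (Suc n) \<omega> - X n \<omega>)\<bar> \<partial>M)"
  shows "integrable M (stopped_value X \<kappa>) \<and> (\<integral>\<omega>. stopped_value X \<kappa> \<omega> \<partial>M) \<le> (\<integral>\<omega>. X 0 \<omega> \<partial>M)"
proof -
  define B where "B n = {\<omega> \<in> space M. enat n < \<kappa> \<omega>}" for n
  define D where "D n \<omega> = indicator (B n) \<omega> * (X (Suc n) \<omega> - X n \<omega>)" for n \<omega>
  define S where "S \<omega> = X 0 \<omega> + (\<Sum>n. D n \<omega>)" for \<omega>
  have X_int: "integrable M (X n)" for n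
    using assms(3) by (rule supermartingale_integrable)
  have B_F: "B n \<in> sets (F n)" for n
    unfolding B_def using assms(2,4) by (rule nat_stopping_time_greater_in_sets)
  have B_M: "B n \<in> sets M" for n
    using B_F nat_filtration_subalgebra[OF assms(2)] by (auto simp: subalgebra_def)
  have D_int: "integrable M (D n)" for n
    using integrable_mult_indicator[OF B_M Bochner_Integration.integrable_diff[OF X_int X_int]]
    by (simp add: D_def[abs_def])
  have D_pointwise: "AE \<omega> in M. (\<lambda>n. D n \<omega>) sums (stopped_value X \<kappa> \<omega> - X 0 \<omega>) \<and> summable (\<lambda>n. norm (D n \<omega>))"
    using AE_stopped_value_sums_increments[OF finite, of X] by (simp add: D_def B_def)
  have D_summable: "summable (\<lambda>n. \<integral>\<omega>. norm (D n \<omega>) \<partial>M)"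
    using summable by (simp add: D_def B_def)
  have S_int: "integrable M S"
    unfolding S_def using X_int integrable_suminf[OF D_int _ D_summable] D_pointwise by auto
  have D_sums: "(\<lambda>n. \<integral>\<omega>. D n \<omega> \<partial>M) sums (\<integral>\<omega>. (\<Sum>n. D n \<omega>) \<partial>M)"
    using sums_integral[OF D_int _ D_summable] D_pointwise by auto
  have S_eq: "AE \<omega> in M. stopped_value X \<kappa> \<omega> = S \<omega>"
    using D_pointwise by eventually_elim (auto simp: S_def sums_iff)
  have SV_meas: "stopped_value X \<kappa> \<in> borel_measurable M"
    using assms(2,4) X_int by (intro stopped_value_borel_measurable) auto
  have SV_int: "integrable M (stopped_value X \<kappa>)"
    using integrable_cong_AE_imp[OF S_int SV_meas] S_eq by (simp add: eq_commute)
  have "(\<integral>\<omega>. D n \<omega> \<partial>M) \<le> 0" for n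
    unfolding D_def using assms(1) nat_filtration_subalgebra[OF assms(2)] assms(3) B_F
    by (rule supermartingale_integral_indicator_increment_nonpos)
  then have "(\<integral>\<omega>. (\<Sum>n. D n \<omega>) \<partial>M) \<le> 0"
    using D_sums sums_zero by (rule sums_le)
  moreover have "(\<integral>\<omega>. stopped_value X \<kappa> \<omega> \<partial>M) = (\<integral>\<omega>. X 0 \<omega> \<partial>M) + (\<integral>\<omega>. (\<Sum>n. D n \<omega>) \<partial>M)"
    using integral_cong_AE[OF SV_meas _ S_eq] S_int X_int integrable_suminf[OF D_int _ D_summable] D_pointwise
    by (auto simp: S_def)
  ultimately show ?thesis
    using SV_int by simp
qed

lemma supermartingale_optional_stopping_tail_bounds:
  fixes K p :: "nat \<Rightarrow> real"
  assumes "finite_measure M" "nat_filtration M F" "supermartingale M F X" "nat_stopping_time M F \<kappa>"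
    and increment_bound: "\<forall>\<^sub>F n in sequentially. AE \<omega> in M. \<bar>X (Suc n) \<omega> - X n \<omega>\<bar> \<le> K n"
    and tail_bound: "\<forall>\<^sub>F n in sequentially. measure M {\<omega> \<in> space M. enat n < \<kappa> \<omega>} \<le> p n"
    and "p \<longlonglongrightarrow> 0" "\<And>n. K n \<ge> 0" "summable (\<lambda>n. K n * p n)"
  shows "integrable M (stopped_value X \<kappa>) \<and> (\<integral>\<omega>. stopped_value X \<kappa> \<omega> \<partial>M) \<le> (\<integral>\<omega>. X 0 \<omega> \<partial>M)"
proof -
  have tail_sets: "{\<omega> \<in> space M. enat n < \<kappa> \<omega>} \<in> sets M" for n
    using nat_stopping_time_greater_in_sets[OF assms(2,4)] nat_filtration_subalgebra[OF assms(2)]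
    by (auto simp: subalgebra_def)
  have "(\<lambda>n. measure M {\<omega> \<in> space M. enat n < \<kappa> \<omega>}) \<longlonglongrightarrow> 0"
  proof (rule Lim_null_comparison)
    show "\<forall>\<^sub>F n in sequentially. norm (measure M {\<omega> \<in> space M. enat n < \<kappa> \<omega>}) \<le> p n"
      using tail_bound by simp
  qed fact
  then have "AE \<omega> in M. \<kappa> \<omega> \<noteq> \<infinity>"
    by (rule AE_enat_finite_if_measure_greater_tendsto_0[OF assms(1) tail_sets])
  moreover have "summable (\<lambda>n. \<integral>\<omega>. \<bar>indicator {\<omega> \<in> space M. enat n < \<kappa> \<omega>} \<omega> * (X (Suc n) \<omega> - X n \<omega>)\<bar> \<partial>M)"
    using assms(1) supermartingale_integrable[OF assms(3)] tail_sets increment_bound tail_bound assms(8,9)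
    by (rule summable_integral_increments_if_tail_bounds)
  ultimately show ?thesis
    using assms(1-4) by (intro supermartingale_optional_stopping_summable)
qed

theorem theorem4p3:
  fixes M :: "'a measure" and F :: "nat \<Rightarrow> 'a measure"
    and X :: "nat \<Rightarrow> 'a \<Rightarrow> real" and \<kappa> :: "'a \<Rightarrow> enat"
    and b1 b2 c1 c2 c3 :: real
  assumes "prob_space M"
    and "nat_filtration M F"
    and "supermartingale M F X"
    and "nat_stopping_time M F \<kappa>"
    and "b1 > 0" "b2 > 0" "c1 > 0" "c2 > 0" "c3 > 0" "c2 > c3"
    and A1: "\<exists>N. \<forall>n\<ge>N. measure M {\<omega> \<in> space M. \<kappa> \<omega> > enat n} \<le> c1 * exp (- c2 * real n)"
    and A2: "\<forall>n\<ge>1. AE \<omega> in M. \<bar>X (Suc n) \<omega> - X n \<omega>\<bar> \<le> b1 * real n powr b2 * exp (c3 * real n)"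
  shows "integrable M (stopped_value X \<kappa>) \<and>
         (\<integral>\<omega>. stopped_value X \<kappa> \<omega> \<partial>M) \<le> (\<integral>\<omega>. X 0 \<omega> \<partial>M)"
proof -
  interpret prob_space M by fact
  define K where "K n = b1 * real n powr b2 * exp (c3 * real n)" for n
  define p where "p n = c1 * exp (- c2 * real n)" for n
  have "exp (c3 * real n) * exp (- c2 * real n) = exp (- (c2 - c3) * real n)" for n
    by (simp add: algebra_simps flip: exp_add)
  then have "K n * p n = b1 * c1 * (real n powr b2 * exp (- (c2 - c3) * real n))" for n
    by (simp add: K_def p_def ac_simps)
  then have "summable (\<lambda>n. K n * p n)"
    using summable_powr_mult_exp_neg[of "c2 - c3" b2] \<open>c2 > c3\<close> by (simp add: summable_mult)
  moreover have "p \<longlonglongrightarrow> 0"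
    unfolding p_def using \<open>c2 > 0\<close> by real_asymp
  moreover have "\<forall>\<^sub>F n in sequentially. AE \<omega> in M. \<bar>X (Suc n) \<omega> - X n \<omega>\<bar> \<le> K n"
    using A2 by (auto simp: K_def eventually_sequentially)
  moreover have "\<forall>\<^sub>F n in sequentially. measure M {\<omega> \<in> space M. enat n < \<kappa> \<omega>} \<le> p n"
    using A1 by (simp add: p_def eventually_sequentially)
  moreover have "K n \<ge> 0" for n
    using \<open>b1 > 0\<close> by (simp add: K_def)
  ultimately show ?thesis
    using finite_measure_axioms assms(2-4) by (intro supermartingale_optional_stopping_tail_bounds)
qed

end
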